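(* Let $\Gamma$ be a distance-regular graph with diameter $D\ge 3$ and valency $k$. Let $\sigma_0,\sigma_1,\dots,\sigma_D$ and $\varepsilon,h$ be real numbers; write $\sigma=\sigma_1$. Then the following are equivalent. (i) $a_1\neq 0$; $\sigma_0,\dots,\sigma_D$ is a feasible pseudo cosine sequence of $\Gamma$, $\varepsilon$ is its auxiliary parameter, and $$h=\frac{(1-\sigma)(1-\sigma_2)}{(\sigma^2-\sigma_2)(1-\varepsilon\sigma)}.$$ (ii) $\sigma_0=1$, $\varepsilon\neq 1$, $\varepsilon\neq -1$, $$k=h\frac{\sigma-\varepsilon}{\sigma-1},$$ $$b_i=h\frac{(\sigma_{i-1}-\sigma\sigma_i)(\sigma_{i+1}-\varepsilon\sigma_i)}{(\sigma_{i-1}-\sigma_{i+1})(\sigma_{i+1}-\sigma_i)}\quad(1\le i\le D-1),$$ $$c_i=h\frac{(\sigma_{i+1}-\sigma\sigma_i)(\sigma_{i-1}-\varepsilon\sigma_i)}{(\sigma_{i+1}-\sigma_{i-1})(\sigma_{i-1}-\sigma_i)}\quad(1\le i\le D-1),$$ and all denominators in these three formulas are nonzero.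
   Context: $\Gamma$ is a finite connected undirected graph without loops or multiple edges, distance-regular with diameter $D$, intersection numbers $a_i,b_i,c_i$ ($c_0=0$, $b_D=0$, $c_1=1$), valency $k=b_0$, $c_i+a_i+b_i=k$. For $\theta\in\mathbb{R}$ the pseudo cosine sequence for $\theta$ is the sequence of reals $\sigma_0,\dots,\sigma_D$ with $\sigma_0=1$ and $c_i\sigma_{i-1}+a_i\sigma_i+b_i\sigma_{i+1}=\theta\sigma_i$ for $0\le i\le D-1$. It is nontrivial if $\sigma_1\ne 1$. Pseudo cosine sequences $\sigma_i$, $\rho_i$ form a tight pair if $(\sigma_i\rho_i)_{i=0}^D$ is a pseudo cosine sequence. For a tight pair of nontrivial pseudo cosine sequences, an auxiliary parameter is a real $\varepsilon$ with $\sigma_i\rho_i-\sigma_{i-1}\rho_{i-1}=\varepsilon(\sigma_{i-1}\rho_i-\sigma_i\rho_{i-1})$ for $1\le i\le D$. When $a_1\neq 0$: a nontrivial pseudo cosine sequence $\sigma_0,\dots,\sigma_D$ is tight if some nontrivial pseudo cosine sequence $\rho_0,\dots,\rho_D$ forms a tight pair with it, and its auxiliary parameter is the (uniquely determined) auxiliary parameter of that pair; a pseudo cosine sequence is feasible if it is tight and $\sigma_{i-1}\neq\sigma_{i+1}$ for $1\le i\le D-1$. *)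

theory Defs
  imports Main "HOL.Real"
begin

text \<open>A graph is given by a vertex set V and a symmetric irreflexive adjacency
relation E (only its restriction to V matters).\<close>

definition simple_graph :: "'a set \<Rightarrow> ('a \<Rightarrow> 'a \<Rightarrow> bool) \<Rightarrow> bool" where
  "simple_graph V E \<longleftrightarrow> finite V \<and> V \<noteq> {} \<and>
     (\<forall>u\<in>V. \<forall>v\<in>V. E u v \<longleftrightarrow> E v u) \<and> (\<forall>u\<in>V. \<not> E u u)"

definition adjrel :: "'a set \<Rightarrow> ('a \<Rightarrow> 'a \<Rightarrow> bool) \<Rightarrow> ('a \<times> 'a) set" where
  "adjrel V E = {(u, v). u \<in> V \<and> v \<in> V \<and> E u v}"

definition connected_graph :: "'a set \<Rightarrow> ('a \<Rightarrow> 'a \<Rightarrow> bool) \<Rightarrow> bool" where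
  "connected_graph V E \<longleftrightarrow> (\<forall>x\<in>V. \<forall>y\<in>V. \<exists>n. (x, y) \<in> adjrel V E ^^ n)"

definition gdist :: "'a set \<Rightarrow> ('a \<Rightarrow> 'a \<Rightarrow> bool) \<Rightarrow> 'a \<Rightarrow> 'a \<Rightarrow> nat" where
  "gdist V E x y = (LEAST n. (x, y) \<in> adjrel V E ^^ n)"

definition diameter :: "'a set \<Rightarrow> ('a \<Rightarrow> 'a \<Rightarrow> bool) \<Rightarrow> nat" where
  "diameter V E = Max {gdist V E x y | x y. x \<in> V \<and> y \<in> V}"

text \<open>Distance-regular with diameter D and intersection numbers a, b, c:
for all vertices x, y at distance i,
 c i = |{z adjacent to y : d(x,z) = i-1}|, a i = |{z adjacent to y : d(x,z) = i}|,
 b i = |{z adjacent to y : d(x,z) = i+1}|.  (For i = 0 the c-count is 0 since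
the graph is loopless.)  The valency is k = b 0.\<close>
definition distance_regular ::
  "'a set \<Rightarrow> ('a \<Rightarrow> 'a \<Rightarrow> bool) \<Rightarrow> nat \<Rightarrow> (nat \<Rightarrow> nat) \<Rightarrow> (nat \<Rightarrow> nat) \<Rightarrow> (nat \<Rightarrow> nat) \<Rightarrow> bool" where
  "distance_regular V E D a b c \<longleftrightarrow>
     simple_graph V E \<and> connected_graph V E \<and> diameter V E = D \<and>
     (\<forall>x\<in>V. \<forall>y\<in>V.
        card {z \<in> V. E y z \<and> gdist V E x z + 1 = gdist V E x y} = c (gdist V E x y) \<and>
        card {z \<in> V. E y z \<and> gdist V E x z = gdist V E x y} = a (gdist V E x y) \<and>
        card {z \<in> V. E y z \<and> gdist V E x z = gdist V E x y + 1} = b (gdist V E x y))"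

definition pseudo_cosine_for ::
  "nat \<Rightarrow> (nat \<Rightarrow> nat) \<Rightarrow> (nat \<Rightarrow> nat) \<Rightarrow> (nat \<Rightarrow> nat) \<Rightarrow> real \<Rightarrow> (nat \<Rightarrow> real) \<Rightarrow> bool" where
  "pseudo_cosine_for D a b c \<theta> s \<longleftrightarrow> s 0 = 1 \<and>
     (\<forall>i<D. (if i = 0 then 0 else real (c i) * s (i - 1)) + real (a i) * s i
             + real (b i) * s (i + 1) = \<theta> * s i)"

definition pseudo_cosine ::
  "nat \<Rightarrow> (nat \<Rightarrow> nat) \<Rightarrow> (nat \<Rightarrow> nat) \<Rightarrow> (nat \<Rightarrow> nat) \<Rightarrow> (nat \<Rightarrow> real) \<Rightarrow> bool" where
  "pseudo_cosine D a b c s \<longleftrightarrow> (\<exists>\<theta>. pseudo_cosine_for D a b c \<theta> s)"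

definition nontrivial_pcs ::
  "nat \<Rightarrow> (nat \<Rightarrow> nat) \<Rightarrow> (nat \<Rightarrow> nat) \<Rightarrow> (nat \<Rightarrow> nat) \<Rightarrow> (nat \<Rightarrow> real) \<Rightarrow> bool" where
  "nontrivial_pcs D a b c s \<longleftrightarrow> pseudo_cosine D a b c s \<and> s 1 \<noteq> 1"

definition tight_pair ::
  "nat \<Rightarrow> (nat \<Rightarrow> nat) \<Rightarrow> (nat \<Rightarrow> nat) \<Rightarrow> (nat \<Rightarrow> nat) \<Rightarrow> (nat \<Rightarrow> real) \<Rightarrow> (nat \<Rightarrow> real) \<Rightarrow> bool" where
  "tight_pair D a b c s r \<longleftrightarrow> pseudo_cosine D a b c s \<and> pseudo_cosine D a b c r \<and>
     pseudo_cosine D a b c (\<lambda>i. s i * r i)"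

definition aux_param_pair :: "nat \<Rightarrow> (nat \<Rightarrow> real) \<Rightarrow> (nat \<Rightarrow> real) \<Rightarrow> real \<Rightarrow> bool" where
  "aux_param_pair D s r e \<longleftrightarrow>
     (\<forall>i\<in>{1..D}. s i * r i - s (i - 1) * r (i - 1) = e * (s (i - 1) * r i - s i * r (i - 1)))"

definition tight_pcs ::
  "nat \<Rightarrow> (nat \<Rightarrow> nat) \<Rightarrow> (nat \<Rightarrow> nat) \<Rightarrow> (nat \<Rightarrow> nat) \<Rightarrow> (nat \<Rightarrow> real) \<Rightarrow> bool" where
  "tight_pcs D a b c s \<longleftrightarrow> nontrivial_pcs D a b c s \<and>
     (\<exists>r. nontrivial_pcs D a b c r \<and> tight_pair D a b c s r)"

definition aux_param ::
  "nat \<Rightarrow> (nat \<Rightarrow> nat) \<Rightarrow> (nat \<Rightarrow> nat) \<Rightarrow> (nat \<Rightarrow> nat) \<Rightarrow> (nat \<Rightarrow> real) \<Rightarrow> real \<Rightarrow> bool" where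
  "aux_param D a b c s e \<longleftrightarrow> nontrivial_pcs D a b c s \<and>
     (\<exists>r. nontrivial_pcs D a b c r \<and> tight_pair D a b c s r \<and> aux_param_pair D s r e)"

definition feasible_pcs ::
  "nat \<Rightarrow> (nat \<Rightarrow> nat) \<Rightarrow> (nat \<Rightarrow> nat) \<Rightarrow> (nat \<Rightarrow> nat) \<Rightarrow> (nat \<Rightarrow> real) \<Rightarrow> bool" where
  "feasible_pcs D a b c s \<longleftrightarrow> pseudo_cosine D a b c s \<and> tight_pcs D a b c s \<and>
     (\<forall>i\<in>{1..D-1}. s (i - 1) \<noteq> s (i + 1))"

end

theory Submission
  imports Defs
begin

text \<open>
  Eliminating a_i = k - b_i - c_i and theta = k sigma_1, a pseudo cosine sequence is a solution
  of c_i (s_{i-1} - s_i) + b_i (s_{i+1} - s_i) = k (s_1 - 1) s_i with s_0 = 1.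
  For a tight pair (s, r) with auxiliary parameter eps, the auxiliary relations at i and i + 1
  express r_{i-1} and r_{i+1} through r_i, so the recurrence for r at i becomes a second linear
  relation between b_i and c_i. Solving the two relations gives the stated formulas with
  h = k (s_1 - 1) / (s_1 - eps); here a_1 \<noteq> 0 excludes eps = +-1 (a short computation at
  i = 1, 2, 3), and feasibility together with the recurrence keeps all denominators nonzero.

  Conversely, the formulas give back the recurrence for s, and solving the auxiliary relation
  for r defines a partner sequence; the same formulas show that r and the product s r satisfy
  the recurrence, so s is tight with auxiliary parameter eps. Finally a_1 \<noteq> 0, because
  when a_1 = 0 any tight pair has s_1 = +-1 or r_1 = +-1, which the formulas rule out.
\<close>

section \<open>Distances in a connected simple graph\<close>

lemma simple_graph_finite: "simple_graph V E \<Longrightarrow> finite V"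
  and simple_graph_nonempty: "simple_graph V E \<Longrightarrow> V \<noteq> {}"
  unfolding simple_graph_def by blast+

lemma simple_graph_sym: "simple_graph V E \<Longrightarrow> u \<in> V \<Longrightarrow> v \<in> V \<Longrightarrow> E u v \<Longrightarrow> E v u"
  unfolding simple_graph_def by blast

lemma simple_graph_irrefl: "simple_graph V E \<Longrightarrow> u \<in> V \<Longrightarrow> \<not> E u u"
  unfolding simple_graph_def by blast

lemma gdist_le: "(x, y) \<in> adjrel V E ^^ n \<Longrightarrow> gdist V E x y \<le> n"
  unfolding gdist_def by (rule Least_le)

lemma gdist_self [simp]: "gdist V E x x = 0"
  unfolding gdist_def by (rule Least_eq_0) simp

context
  fixes V :: "'a set" and E :: "'a \<Rightarrow> 'a \<Rightarrow> bool"
  assumes simple: "simple_graph V E" and connected: "connected_graph V E"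
begin

lemma gdist_relpow: "x \<in> V \<Longrightarrow> y \<in> V \<Longrightarrow> (x, y) \<in> adjrel V E ^^ gdist V E x y"
  using connected unfolding gdist_def connected_graph_def by (metis LeastI_ex)

lemma gdist_eq_0_iff: "x \<in> V \<Longrightarrow> y \<in> V \<Longrightarrow> gdist V E x y = 0 \<longleftrightarrow> x = y"
  using gdist_relpow[of x y] by (metis gdist_self pair_in_Id_conv relpow.simps(1))

lemma gdist_adjacent_le:
  assumes "x \<in> V" "y \<in> V" "z \<in> V" "E y z"
  shows "gdist V E x z \<le> gdist V E x y + 1"
proof -
  have "(x, z) \<in> adjrel V E ^^ Suc (gdist V E x y)"
    using gdist_relpow[of x y] assms by (auto simp: adjrel_def)
  then show ?thesis using gdist_le by fastforce
qed

lemma gdist_adjacent_ge: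
  assumes "x \<in> V" "y \<in> V" "z \<in> V" "E y z"
  shows "gdist V E x y \<le> gdist V E x z + 1"
proof -
  have "E z y" using assms simple_graph_sym[OF simple] by blast
  then show ?thesis using gdist_adjacent_le[of x z y] assms by simp
qed

lemma gdist_adjacent_eq_1:
  assumes "x \<in> V" "z \<in> V" "E x z"
  shows "gdist V E x z = 1"
proof -
  have "gdist V E x z \<le> 1" using assms by (intro gdist_le) (simp add: adjrel_def)
  moreover have "x \<noteq> z" using assms simple_graph_irrefl[OF simple] by blast
  ultimately show ?thesis using gdist_eq_0_iff assms by fastforce
qed

lemma gdist_Suc_predecessor:
  assumes "x \<in> V" "y \<in> V" "gdist V E x y = Suc m"
  obtains w where "w \<in> V" "E w y" "gdist V E x w = m"
proof -
  obtain w where w: "(x, w) \<in> adjrel V E ^^ m" "(w, y) \<in> adjrel V E"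
    using gdist_relpow[of x y] assms by (auto elim: relpow_Suc_E)
  then have "w \<in> V" "E w y" by (auto simp: adjrel_def)
  moreover have "gdist V E x w = m"
    using gdist_le[OF w(1)] gdist_adjacent_le[of x w y] assms \<open>w \<in> V\<close> \<open>E w y\<close> by simp
  ultimately show thesis by (rule that)
qed

lemma gdist_layers_adjacent:
  assumes "x \<in> V" "y \<in> V" "j < gdist V E x y"
  shows "\<exists>v\<in>V. \<exists>u\<in>V. E v u \<and> gdist V E x v = j \<and> gdist V E x u = Suc j"
  using assms(2,3)
proof (induction "gdist V E x y" arbitrary: y)
  case 0
  then show ?case by simp
next
  case (Suc m)
  obtain w where w: "w \<in> V" "E w y" "gdist V E x w = m"
    using gdist_Suc_predecessor[OF assms(1) Suc.prems(1) Suc.hyps(2)[symmetric]] .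
  show ?case
  proof (cases "j = m")
    case True
    then show ?thesis using w Suc.prems(1) Suc.hyps(2) by metis
  next
    case False
    then show ?thesis
      using Suc.hyps(1)[OF w(3)[symmetric] w(1)] Suc.prems(2) Suc.hyps(2) w(3) by simp
  qed
qed

end

lemma diameter_attained:
  assumes "simple_graph V E"
  obtains x y where "x \<in> V" "y \<in> V" "gdist V E x y = diameter V E"
proof -
  let ?S = "{gdist V E x y | x y. x \<in> V \<and> y \<in> V}"
  have "?S = (\<lambda>(x, y). gdist V E x y) ` (V \<times> V)" by auto
  then have "finite ?S" "?S \<noteq> {}"
    using simple_graph_finite[OF assms] simple_graph_nonempty[OF assms] by auto
  then have "Max ?S \<in> ?S" by (rule Max_in)
  then obtain x y where "x \<in> V" "y \<in> V" "Max ?S = gdist V E x y" by blast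
  then show thesis using that by (simp add: diameter_def)
qed

section \<open>Intersection arrays and pseudo cosine sequences\<close>

lemma distance_regularD:
  assumes "distance_regular V E D a b c"
  shows "simple_graph V E" "connected_graph V E" "diameter V E = D"
    and "\<And>x y. x \<in> V \<Longrightarrow> y \<in> V \<Longrightarrow>
      card {z \<in> V. E y z \<and> gdist V E x z + 1 = gdist V E x y} = c (gdist V E x y)"
    and "\<And>x y. x \<in> V \<Longrightarrow> y \<in> V \<Longrightarrow>
      card {z \<in> V. E y z \<and> gdist V E x z = gdist V E x y} = a (gdist V E x y)"
    and "\<And>x y. x \<in> V \<Longrightarrow> y \<in> V \<Longrightarrow>
      card {z \<in> V. E y z \<and> gdist V E x z = gdist V E x y + 1} = b (gdist V E x y)"
  using assms unfolding distance_regular_def by blast+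

locale intersection_array =
  fixes D :: nat and a b c :: "nat \<Rightarrow> nat"
  assumes D_pos: "0 < D"
    and a_0: "a 0 = 0" and c_1: "c 1 = 1"
    and row_sum: "1 \<le> i \<Longrightarrow> i < D \<Longrightarrow> c i + a i + b i = b 0"
    and b_pos: "i < D \<Longrightarrow> 0 < b i"
    and c_pos: "1 \<le> i \<Longrightarrow> i < D \<Longrightarrow> 0 < c i"

context
  fixes V :: "'a set" and E :: "'a \<Rightarrow> 'a \<Rightarrow> bool" and D :: nat and a b c :: "nat \<Rightarrow> nat"
  assumes drg: "distance_regular V E D a b c"
begin

lemma distance_regular_edge_across_layers:
  assumes "j < D"
  obtains x v u where "x \<in> V" "v \<in> V" "u \<in> V" "E v u"
    "gdist V E x v = j" "gdist V E x u = Suc j"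
proof -
  obtain x y where "x \<in> V" "y \<in> V" "gdist V E x y = D"
    using diameter_attained distance_regularD(1,3)[OF drg] by metis
  then show thesis
    using gdist_layers_adjacent[OF distance_regularD(1,2)[OF drg], of x y j] assms that by auto
qed

lemma distance_regular_valency:
  assumes "y \<in> V"
  shows "card {z \<in> V. E y z} = b 0"
proof -
  have "{z \<in> V. E y z \<and> gdist V E y z = gdist V E y y + 1} = {z \<in> V. E y z}"
    using gdist_adjacent_eq_1[OF distance_regularD(1,2)[OF drg] assms] by auto
  then show ?thesis using distance_regularD(6)[OF drg assms assms] by simp
qed

lemma distance_regular_row_sum:
  assumes "x \<in> V" "y \<in> V"
  shows "c (gdist V E x y) + a (gdist V E x y) + b (gdist V E x y) = b 0"
proof -
  note simple = distance_regularD(1)[OF drg] and connected = distance_regularD(2)[OF drg]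
  let ?d = "gdist V E x"
  let ?C = "{z \<in> V. E y z \<and> ?d z + 1 = ?d y}"
  let ?A = "{z \<in> V. E y z \<and> ?d z = ?d y}"
  let ?B = "{z \<in> V. E y z \<and> ?d z = ?d y + 1}"
  have "{z \<in> V. E y z} = ?C \<union> ?A \<union> ?B"
    using gdist_adjacent_le[OF simple connected assms] gdist_adjacent_ge[OF simple connected assms]
    by fastforce
  moreover have "finite V" using simple by (rule simple_graph_finite)
  ultimately have "card {z \<in> V. E y z} = card ?C + card ?A + card ?B"
    by (simp add: card_Un_disjoint disjoint_iff)
  then show ?thesis
    using distance_regularD(4-6)[OF drg assms] distance_regular_valency[OF assms(2)] by simp
qed

lemma distance_regular_a_0: "a 0 = 0"
proof -
  obtain x where x: "x \<in> V" using simple_graph_nonempty[OF distance_regularD(1)[OF drg]] by blast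
  have "{z \<in> V. E x z \<and> gdist V E x z = gdist V E x x} = {}"
    using gdist_eq_0_iff[OF distance_regularD(1,2)[OF drg] x]
      simple_graph_irrefl[OF distance_regularD(1)[OF drg] x] by auto
  then show ?thesis using distance_regularD(5)[OF drg x x] by (metis card.empty gdist_self)
qed

lemma distance_regular_c_1:
  assumes "0 < D"
  shows "c 1 = 1"
proof -
  note simple = distance_regularD(1)[OF drg] and connected = distance_regularD(2)[OF drg]
  obtain x v u where xvu: "x \<in> V" "v \<in> V" "u \<in> V" "E v u"
    "gdist V E x v = 0" "gdist V E x u = Suc 0"
    using distance_regular_edge_across_layers[OF assms] by blast
  have "v = x" using xvu gdist_eq_0_iff[OF simple connected] by blast
  moreover have "E u v" using xvu simple_graph_sym[OF simple] by blast
  ultimately have "{z \<in> V. E u z \<and> gdist V E x z + 1 = gdist V E x u} = {x}"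
    using xvu gdist_eq_0_iff[OF simple connected] by auto
  then show ?thesis using distance_regularD(4)[OF drg xvu(1,3)] xvu(6) by simp
qed

lemma distance_regular_b_pos:
  assumes "i < D"
  shows "0 < b i"
proof -
  obtain x v u where xvu: "x \<in> V" "v \<in> V" "u \<in> V" "E v u"
    "gdist V E x v = i" "gdist V E x u = Suc i"
    using distance_regular_edge_across_layers[OF assms] by blast
  have "u \<in> {z \<in> V. E v z \<and> gdist V E x z = gdist V E x v + 1}" using xvu by simp
  then have "card {z \<in> V. E v z \<and> gdist V E x z = gdist V E x v + 1} > 0"
    using simple_graph_finite[OF distance_regularD(1)[OF drg]] by (auto simp: card_gt_0_iff)
  then show ?thesis using distance_regularD(6)[OF drg xvu(1,2)] xvu(5) by simp
qed

lemma distance_regular_c_pos: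
  assumes "1 \<le> i" "i < D"
  shows "0 < c i"
proof -
  have "i - 1 < D" using assms by simp
  then obtain x v u where xvu: "x \<in> V" "v \<in> V" "u \<in> V" "E v u"
    "gdist V E x v = i - 1" "gdist V E x u = Suc (i - 1)"
    by (rule distance_regular_edge_across_layers)
  have "v \<in> {z \<in> V. E u z \<and> gdist V E x z + 1 = gdist V E x u}"
    using xvu simple_graph_sym[OF distance_regularD(1)[OF drg]] by simp
  then have "card {z \<in> V. E u z \<and> gdist V E x z + 1 = gdist V E x u} > 0"
    using simple_graph_finite[OF distance_regularD(1)[OF drg]] by (auto simp: card_gt_0_iff)
  then show ?thesis using distance_regularD(4)[OF drg xvu(1,3)] xvu(6) assms(1) by simp
qed

lemma distance_regular_intersection_array:
  assumes "0 < D"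
  shows "intersection_array D a b c"
proof
  fix i assume "1 \<le> i" "i < D"
  then obtain x v where "x \<in> V" "v \<in> V" "gdist V E x v = i"
    using distance_regular_edge_across_layers by metis
  then show "c i + a i + b i = b 0" using distance_regular_row_sum by metis
qed (use assms distance_regular_a_0 distance_regular_c_1 distance_regular_b_pos
        distance_regular_c_pos in auto)

end

definition cosine_recurrence ::
  "nat \<Rightarrow> (nat \<Rightarrow> nat) \<Rightarrow> (nat \<Rightarrow> nat) \<Rightarrow> (nat \<Rightarrow> real) \<Rightarrow> bool" where
  "cosine_recurrence D b c f \<longleftrightarrow> (\<forall>i. 1 \<le> i \<longrightarrow> i < D \<longrightarrow>
     real (c i) * (f (i - 1) - f i) + real (b i) * (f (i + 1) - f i) = real (b 0) * (f 1 - 1) * f i)"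

lemma cosine_recurrenceD:
  "cosine_recurrence D b c f \<Longrightarrow> 1 \<le> i \<Longrightarrow> i < D \<Longrightarrow>
    real (c i) * (f (i - 1) - f i) + real (b i) * (f (i + 1) - f i) = real (b 0) * (f 1 - 1) * f i"
  unfolding cosine_recurrence_def by blast

context intersection_array
begin

lemma a_eq: "1 \<le> i \<Longrightarrow> i < D \<Longrightarrow> real (a i) = real (b 0) - real (b i) - real (c i)"
  using row_sum[of i] by simp

lemma pseudo_cosine_for_iff:
  "pseudo_cosine_for D a b c \<theta> f \<longleftrightarrow>
    f 0 = 1 \<and> \<theta> = real (b 0) * f 1 \<and> cosine_recurrence D b c f"
proof -
  have step: "real (c i) * f (i - 1) + real (a i) * f i + real (b i) * f (i + 1)
        = real (b 0) * f 1 * f i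
      \<longleftrightarrow> real (c i) * (f (i - 1) - f i) + real (b i) * (f (i + 1) - f i)
        = real (b 0) * (f 1 - 1) * f i"
    if "1 \<le> i" "i < D" for i
  proof -
    have "real (c i) * f (i - 1) + real (a i) * f i + real (b i) * f (i + 1) - real (b 0) * f 1 * f i
      = real (c i) * (f (i - 1) - f i) + real (b i) * (f (i + 1) - f i)
        - real (b 0) * (f 1 - 1) * f i"
      unfolding a_eq[OF that] by (simp add: algebra_simps)
    then show ?thesis by linarith
  qed
  have split_first: "(\<forall>i<D. P i) \<longleftrightarrow> P 0 \<and> (\<forall>i. 1 \<le> i \<longrightarrow> i < D \<longrightarrow> P i)" for P
    using D_pos by (metis less_one not_less)
  show ?thesis
    unfolding pseudo_cosine_for_def cosine_recurrence_def split_first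
    using step a_0 by (auto simp: mult.commute)
qed

lemma pseudo_cosine_iff: "pseudo_cosine D a b c f \<longleftrightarrow> f 0 = 1 \<and> cosine_recurrence D b c f"
  unfolding pseudo_cosine_def pseudo_cosine_for_iff by blast

lemma cosine_recurrence_1:
  assumes "cosine_recurrence D b c f" "1 < D" "f 0 = 1"
  shows "(1 - f 1) + real (b 1) * (f 2 - f 1) = real (b 0) * (f 1 - 1) * f 1"
  using cosine_recurrenceD[OF assms(1), of 1] assms(2,3) c_1 by (simp add: numeral_2_eq_2)

lemma cosine_recurrence_zero_pair:
  assumes "cosine_recurrence D b c f" "n < D" "f n = 0" "f (Suc n) = 0"
  shows "f 0 = 0"
  using assms(2-4)
proof (induction n)
  case (Suc m)
  have "real (c (Suc m)) * f m = 0"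
    using cosine_recurrenceD[OF assms(1), of "Suc m"] Suc.prems by simp
  then have "f m = 0" using c_pos[of "Suc m"] Suc.prems by simp
  then show ?case using Suc by simp
qed simp

lemma feasible_aux_param_iff:
  "feasible_pcs D a b c s \<and> aux_param D a b c s e \<longleftrightarrow>
    s 0 = 1 \<and> s 1 \<noteq> 1 \<and> cosine_recurrence D b c s \<and>
    (\<forall>i\<in>{1..D-1}. s (i - 1) \<noteq> s (i + 1)) \<and>
    (\<exists>r. r 0 = 1 \<and> r 1 \<noteq> 1 \<and> cosine_recurrence D b c r \<and>
         cosine_recurrence D b c (\<lambda>i. s i * r i) \<and> aux_param_pair D s r e)"
  unfolding feasible_pcs_def aux_param_def tight_pcs_def tight_pair_def nontrivial_pcs_def
    pseudo_cosine_iff by auto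

end

section \<open>A tight pair determines the intersection numbers\<close>

lemma three_term_identities:
  fixes k C B x y z p q r \<sigma> \<rho> \<epsilon> :: real
  assumes rec_s: "C * (x - y) + B * (z - y) = k * (\<sigma> - 1) * y"
    and rec_r: "C * (p - q) + B * (r - q) = k * (\<rho> - 1) * q"
    and aux_left: "y * q - x * p = \<epsilon> * (x * q - y * p)"
    and aux_right: "z * r - y * q = \<epsilon> * (y * r - z * q)"
    and aux_first: "\<sigma> * \<rho> - 1 = \<epsilon> * (\<rho> - \<sigma>)"
    and "q \<noteq> 0" "\<epsilon> \<noteq> -1"
  shows "(\<sigma> - \<epsilon>) * C * (x - y) * (z - x) = k * (\<sigma> - 1) * (x - \<epsilon> * y) * (z - \<sigma> * y)"
    and "(\<sigma> - \<epsilon>) * B * (z - y) * (x - z) = k * (\<sigma> - 1) * (z - \<epsilon> * y) * (x - \<sigma> * y)"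
proof -
  have "q * (1 + \<epsilon>) \<noteq> 0" using assms(6,7) by (simp add: add_eq_0_iff)
  \<comment> \<open>The auxiliary relations give (p - q) (x - \<epsilon> y) = q (1 + \<epsilon>) (y - x) and likewise for r,
    so after multiplying by q (1 + \<epsilon>) the recurrence for \<rho> becomes a second linear relation
    between B and C.\<close>
  moreover have "q * (1 + \<epsilon>) *
      ((\<sigma> - \<epsilon>) * C * (x - y) * (z - x) - k * (\<sigma> - 1) * (x - \<epsilon> * y) * (z - \<sigma> * y)) = 0"
    using rec_s rec_r aux_left aux_right aux_first by algebra
  moreover have "q * (1 + \<epsilon>) *
      ((\<sigma> - \<epsilon>) * B * (z - y) * (x - z) - k * (\<sigma> - 1) * (z - \<epsilon> * y) * (x - \<sigma> * y)) = 0"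
    using rec_s rec_r aux_left aux_right aux_first by algebra
  ultimately show "(\<sigma> - \<epsilon>) * C * (x - y) * (z - x) = k * (\<sigma> - 1) * (x - \<epsilon> * y) * (z - \<sigma> * y)"
    and "(\<sigma> - \<epsilon>) * B * (z - y) * (x - z) = k * (\<sigma> - 1) * (z - \<epsilon> * y) * (x - \<sigma> * y)"
    by simp_all
qed

lemma aux_param_pairD:
  "aux_param_pair D s r e \<Longrightarrow> 1 \<le> i \<Longrightarrow> i \<le> D \<Longrightarrow>
    s i * r i - s (i - 1) * r (i - 1) = e * (s (i - 1) * r i - s i * r (i - 1))"
  unfolding aux_param_pair_def by auto

lemma aux_param_pair_swap: "aux_param_pair D s r e \<Longrightarrow> aux_param_pair D r s (- e)"
  unfolding aux_param_pair_def by (auto simp: algebra_simps)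

lemma equal_neighbour_forces_zero:
  fixes C K x y \<sigma> \<epsilon> :: real
  assumes "C * (x - y) = K * (\<sigma> - 1) * y"
    and "K * (\<sigma> - 1) * (y - \<epsilon> * y) * (x - \<sigma> * y) = 0"
    and "K \<noteq> 0" "\<sigma> \<noteq> 1" "\<epsilon> \<noteq> 1" "C \<noteq> K"
  shows "y = 0"
proof -
  have "y - \<epsilon> * y = 0 \<or> x - \<sigma> * y = 0"
    using assms(2-4) by simp
  then have "(1 - \<epsilon>) * y = 0 \<or> x = \<sigma> * y"
    by (auto simp: left_diff_distrib)
  moreover have "(C - K) * (\<sigma> - 1) * y = 0" if "x = \<sigma> * y"
    using assms(1) that by (simp add: algebra_simps)
  ultimately show ?thesis using assms(4-6) by auto
qed

locale cosine_pair = intersection_array +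
  fixes s r :: "nat \<Rightarrow> real" and e :: real
  assumes s_0: "s 0 = 1" and r_0: "r 0 = 1"
    and rec_s: "cosine_recurrence D b c s" and rec_r: "cosine_recurrence D b c r"
    and aux: "aux_param_pair D s r e"
begin

lemma swap: "cosine_pair D a b c r s (- e)"
  by unfold_locales (use r_0 s_0 rec_r rec_s aux_param_pair_swap[OF aux] in auto)

text \<open>For \<epsilon> = -1 the auxiliary relation at i reads (s i + s (i - 1)) (r i - r (i - 1)) = 0;
  following it through i = 1, 2, 3 yields c 2 (s 2 - 1) + 2 a 2 s 2 = 0 with s 2 > 1.\<close>

lemma e_neq_minus_one:
  assumes "3 \<le> D" "a 1 \<noteq> 0" "r 1 \<noteq> 1"
  shows "e \<noteq> -1"
proof
  assume e: "e = -1"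
  have aux_e: "(s i + s (i - 1)) * (r i - r (i - 1)) = 0" if "1 \<le> i" "i \<le> D" for i
    using aux_param_pairD[OF aux that] e by algebra
  have k1: "real (b 0) = 1 + real (a 1) + real (b 1)"
    and k2: "real (b 0) = real (c 2) + real (a 2) + real (b 2)"
    using a_eq[of 1] a_eq[of 2] c_1 assms(1) by simp_all
  have s1: "s 1 = -1" using aux_e[of 1] s_0 r_0 assms(1,3) by simp
  have "real (b 1) * (s 2 - 1) = 2 * real (a 1)"
    using cosine_recurrence_1[OF rec_s _ s_0] k1 s1 assms(1) by simp algebra
  then have "real (b 1) * (s 2 - 1) > 0" using assms(2) by simp
  then have s2: "s 2 > 1" using b_pos[of 1] assms(1) by (simp add: zero_less_mult_iff)
  then have r2: "r 2 = r 1" using aux_e[of 2] s1 assms(1) by simp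
  have "(1 - r 1) * (1 + real (b 0) * r 1) = 0"
    using cosine_recurrence_1[OF rec_r _ r_0] r2 assms(1) by simp algebra
  then have kr: "real (b 0) * r 1 = -1" using assms(3) by simp
  have "real (b 2) * (r 3 - r 1) = 1 - r 1"
    using cosine_recurrenceD[OF rec_r, of 2] r2 kr assms(1) by simp algebra
  then have "r 3 \<noteq> r 2" using assms(3) r2 by auto
  then have s3: "s 3 = - s 2" using aux_e[of 3] assms(1) by simp
  have "real (c 2) * (s 2 - 1) + 2 * real (a 2) * s 2 = 0"
    using cosine_recurrenceD[OF rec_s, of 2] k2 s1 s3 assms(1) by simp algebra
  moreover have "real (c 2) * (s 2 - 1) > 0" using c_pos[of 2] assms(1) s2 by simp
  moreover have "2 * real (a 2) * s 2 \<ge> 0" using s2 by simp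
  ultimately show False by linarith
qed

lemma e_neq_one:
  assumes "3 \<le> D" "a 1 \<noteq> 0" "s 1 \<noteq> 1"
  shows "e \<noteq> 1"
  using cosine_pair.e_neq_minus_one[OF swap assms] by simp

end

definition intersection_numbers_param ::
  "nat \<Rightarrow> (nat \<Rightarrow> nat) \<Rightarrow> (nat \<Rightarrow> nat) \<Rightarrow> (nat \<Rightarrow> real) \<Rightarrow> real \<Rightarrow> real \<Rightarrow> bool" where
  "intersection_numbers_param D b c s e h \<longleftrightarrow>
     s 0 = 1 \<and> e \<noteq> 1 \<and> e \<noteq> -1 \<and>
     real (b 0) = h * (s 1 - e) / (s 1 - 1) \<and>
     (\<forall>i\<in>{1..D-1}.
        real (b i) = h * ((s (i - 1) - s 1 * s i) * (s (i + 1) - e * s i))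
                       / ((s (i - 1) - s (i + 1)) * (s (i + 1) - s i)) \<and>
        real (c i) = h * ((s (i + 1) - s 1 * s i) * (s (i - 1) - e * s i))
                       / ((s (i + 1) - s (i - 1)) * (s (i - 1) - s i))) \<and>
     s 1 - 1 \<noteq> 0 \<and>
     (\<forall>i\<in>{1..D-1}. s (i - 1) - s (i + 1) \<noteq> 0 \<and> s (i + 1) - s i \<noteq> 0 \<and>
                     s (i + 1) - s (i - 1) \<noteq> 0 \<and> s (i - 1) - s i \<noteq> 0)"

locale feasible_pair = cosine_pair +
  assumes three_le_D: "3 \<le> D" and a_1_neq_0: "a 1 \<noteq> 0"
    and s_1_neq_1: "s 1 \<noteq> 1" and r_1_neq_1: "r 1 \<noteq> 1"
    and feasible: "1 \<le> i \<Longrightarrow> i < D \<Longrightarrow> s (i - 1) \<noteq> s (i + 1)"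
begin

lemma e_neq_pm_one: "e \<noteq> 1" "e \<noteq> -1"
  using e_neq_one e_neq_minus_one three_le_D a_1_neq_0 s_1_neq_1 r_1_neq_1 by auto

lemma aux_1: "s 1 * r 1 - 1 = e * (r 1 - s 1)"
  using aux_param_pairD[OF aux, of 1] s_0 r_0 three_le_D by simp

lemma s_1_neq_e: "s 1 \<noteq> e"
proof
  assume se: "s 1 = e"
  have "(e - 1) * (e + 1) = 0" using aux_1 unfolding se by algebra
  then show False using e_neq_pm_one by (simp add: add_eq_0_iff)
qed

lemma aux_step:
  assumes "1 \<le> i" "i < D"
  shows "s (i + 1) * r (i + 1) - s i * r i = e * (s i * r (i + 1) - s (i + 1) * r i)"
  using aux_param_pairD[OF aux, of "i + 1"] assms by simp

lemma r_nonzero: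
  assumes i: "1 \<le> i" "i < D"
  shows "r i \<noteq> 0"
proof
  assume ri: "r i = 0"
  have "r (i - 1) \<noteq> 0"
  proof
    assume "r (i - 1) = 0"
    moreover have "r (Suc (i - 1)) = 0" using ri i by simp
    ultimately have "r 0 = 0" using cosine_recurrence_zero_pair[OF rec_r, of "i - 1"] i by simp
    then show False using r_0 by simp
  qed
  moreover have "r (i - 1) * (s (i - 1) - e * s i) = 0"
    using aux_param_pairD[OF aux, of i] ri i by (simp add: algebra_simps)
  ultimately have left: "s (i - 1) = e * s i" by simp
  have "real (c i) * r (i - 1) + real (b i) * r (i + 1) = 0"
    using cosine_recurrenceD[OF rec_r i] ri by simp
  then have "r (i + 1) \<noteq> 0" using c_pos[OF i] \<open>r (i - 1) \<noteq> 0\<close> by auto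
  moreover have "r (i + 1) * (s (i + 1) - e * s i) = 0"
    using aux_step[OF i] ri by (simp add: algebra_simps)
  ultimately have "s (i + 1) = e * s i" by simp
  then show False using left feasible[OF i] by simp
qed

lemma local_identities:
  assumes i: "1 \<le> i" "i < D"
  shows "(s 1 - e) * real (c i) * (s (i - 1) - s i) * (s (i + 1) - s (i - 1))
        = real (b 0) * (s 1 - 1) * (s (i - 1) - e * s i) * (s (i + 1) - s 1 * s i)"
    and "(s 1 - e) * real (b i) * (s (i + 1) - s i) * (s (i - 1) - s (i + 1))
        = real (b 0) * (s 1 - 1) * (s (i + 1) - e * s i) * (s (i - 1) - s 1 * s i)"
  using three_term_identities[OF cosine_recurrenceD[OF rec_s i] cosine_recurrenceD[OF rec_r i]
      aux_param_pairD[OF aux i(1) less_imp_le[OF i(2)]] aux_step[OF i] aux_1 r_nonzero[OF i]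
      e_neq_pm_one(2)]
  by simp_all

lemma no_consecutive_zeros: "j < D \<Longrightarrow> s j = 0 \<Longrightarrow> s (Suc j) = 0 \<Longrightarrow> False"
  using cosine_recurrence_zero_pair[OF rec_s] s_0 by fastforce

lemma consecutive_distinct:
  assumes i: "1 \<le> i" "i < D"
  shows "s (i + 1) \<noteq> s i" and "s (i - 1) \<noteq> s i"
proof -
  have k: "real (b 0) \<noteq> 0" using b_pos D_pos by simp
  note rec = cosine_recurrenceD[OF rec_s i]
  show "s (i + 1) \<noteq> s i"
  proof
    assume eq: "s (i + 1) = s i"
    have "real (c i) * (s (i - 1) - s i) = real (b 0) * (s 1 - 1) * s i" using rec eq by simp
    moreover have "real (b 0) * (s 1 - 1) * (s i - e * s i) * (s (i - 1) - s 1 * s i) = 0"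
      using local_identities(2)[OF i] eq by simp
    moreover have "real (c i) \<noteq> real (b 0)" using row_sum[OF i] b_pos[OF i(2)] by linarith
    ultimately have "s i = 0"
      using equal_neighbour_forces_zero k s_1_neq_1 e_neq_pm_one(1) by blast
    then show False using no_consecutive_zeros[of i] eq i by simp
  qed
  show "s (i - 1) \<noteq> s i"
  proof
    assume eq: "s (i - 1) = s i"
    have "real (b i) * (s (i + 1) - s i) = real (b 0) * (s 1 - 1) * s i" using rec eq by simp
    moreover have "real (b 0) * (s 1 - 1) * (s i - e * s i) * (s (i + 1) - s 1 * s i) = 0"
      using local_identities(1)[OF i] eq by simp
    moreover have "real (b i) \<noteq> real (b 0)" using row_sum[OF i] c_pos[OF i] by linarith
    ultimately have "s i = 0"
      using equal_neighbour_forces_zero k s_1_neq_1 e_neq_pm_one(1) by blast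
    then show False using no_consecutive_zeros[of "i - 1"] eq i by (simp add: less_imp_diff_less)
  qed
qed

lemma local_identity_1:
  "(s 1 - e) * (1 - s 1) * (1 - s 2) = real (b 0) * (s 1 - 1) * ((s 1 ^ 2 - s 2) * (1 - e * s 1))"
proof -
  have "(s 1 - e) * (1 - s 1) * (s 2 - 1)
      = real (b 0) * (s 1 - 1) * (1 - e * s 1) * (s 2 - s 1 * s 1)"
    using local_identities(1)[of 1] three_le_D s_0 c_1 by (simp add: numeral_2_eq_2)
  then show ?thesis by algebra
qed

lemma parametrization:
  "intersection_numbers_param D b c s e ((1 - s 1) * (1 - s 2) / ((s 1 ^ 2 - s 2) * (1 - e * s 1)))"
proof -
  define h where "h = (1 - s 1) * (1 - s 2) / ((s 1 ^ 2 - s 2) * (1 - e * s 1))"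
  have "s 2 \<noteq> 1" using feasible[of 1] three_le_D s_0 by (simp add: numeral_2_eq_2)
  then have "(s 1 ^ 2 - s 2) * (1 - e * s 1) \<noteq> 0"
    using local_identity_1 s_1_neq_e s_1_neq_1 by auto
  then have hk: "h * (s 1 - e) = real (b 0) * (s 1 - 1)"
    using local_identity_1 s_1_neq_e unfolding h_def by (simp add: field_simps)
  then have valency: "real (b 0) = h * (s 1 - e) / (s 1 - 1)" using s_1_neq_1 by simp
  have formula_b: "real (b i) = h * ((s (i - 1) - s 1 * s i) * (s (i + 1) - e * s i))
                      / ((s (i - 1) - s (i + 1)) * (s (i + 1) - s i))"
    and formula_c: "real (c i) = h * ((s (i + 1) - s 1 * s i) * (s (i - 1) - e * s i))
                      / ((s (i + 1) - s (i - 1)) * (s (i - 1) - s i))"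
    if i: "1 \<le> i" "i < D" for i
  proof -
    have "(s 1 - e) * (real (b i) * ((s (i - 1) - s (i + 1)) * (s (i + 1) - s i)))
        = (s 1 - e) * (h * ((s (i - 1) - s 1 * s i) * (s (i + 1) - e * s i)))"
     and "(s 1 - e) * (real (c i) * ((s (i + 1) - s (i - 1)) * (s (i - 1) - s i)))
        = (s 1 - e) * (h * ((s (i + 1) - s 1 * s i) * (s (i - 1) - e * s i)))"
      using local_identities[OF i] hk by algebra+
    then show "real (b i) = h * ((s (i - 1) - s 1 * s i) * (s (i + 1) - e * s i))
                      / ((s (i - 1) - s (i + 1)) * (s (i + 1) - s i))"
      and "real (c i) = h * ((s (i + 1) - s 1 * s i) * (s (i - 1) - e * s i))
                      / ((s (i + 1) - s (i - 1)) * (s (i - 1) - s i))"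
      using s_1_neq_e feasible[OF i] consecutive_distinct[OF i] by (simp_all add: eq_divide_eq)
  qed
  have distinct: "s (i - 1) - s (i + 1) \<noteq> 0 \<and> s (i + 1) - s i \<noteq> 0 \<and>
      s (i + 1) - s (i - 1) \<noteq> 0 \<and> s (i - 1) - s i \<noteq> 0" if "1 \<le> i" "i < D" for i
    using feasible[OF that] consecutive_distinct[OF that] by auto
  show ?thesis
    unfolding intersection_numbers_param_def h_def[symmetric]
    using D_pos s_0 e_neq_pm_one s_1_neq_1 valency formula_b formula_c distinct by auto
qed

end

section \<open>The intersection numbers determine a tight pair\<close>

lemma param_recurrence_cosine:
  fixes h x y z \<sigma> \<epsilon> B C :: real
  assumes "C * ((z - x) * (x - y)) = h * ((z - \<sigma> * y) * (x - \<epsilon> * y))"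
    and "B * ((x - z) * (z - y)) = h * ((x - \<sigma> * y) * (z - \<epsilon> * y))"
    and "x \<noteq> z"
  shows "C * (x - y) + B * (z - y) = h * (\<sigma> - \<epsilon>) * y"
proof -
  have "(z - x) * (C * (x - y) + B * (z - y) - h * (\<sigma> - \<epsilon>) * y) = 0"
    using assms(1,2) by algebra
  then show ?thesis using assms(3) by simp
qed

lemma param_recurrence_partner:
  fixes h x y z \<sigma> \<epsilon> p q r B C :: real
  assumes "C * ((z - x) * (x - y)) = h * ((z - \<sigma> * y) * (x - \<epsilon> * y))"
    and "B * ((x - z) * (z - y)) = h * ((x - \<sigma> * y) * (z - \<epsilon> * y))"
    and "q * (y - \<epsilon> * x) = p * (x - \<epsilon> * y)" and "r * (z - \<epsilon> * y) = q * (y - \<epsilon> * z)"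
    and "x \<noteq> z" "y - \<epsilon> * x \<noteq> 0" "z - \<epsilon> * y \<noteq> 0"
  shows "C * (p - q) + B * (r - q) = - h * (1 + \<epsilon>) * q"
proof -
  have "((z - x) * (y - \<epsilon> * x) * (z - \<epsilon> * y)) *
      (C * (p - q) + B * (r - q) + h * (1 + \<epsilon>) * q) = 0"
    using assms(1-4) by algebra
  then show ?thesis using assms(5-7) by simp
qed

lemma param_recurrence_product:
  fixes h x y z \<sigma> \<epsilon> p q r B C :: real
  assumes "C * ((z - x) * (x - y)) = h * ((z - \<sigma> * y) * (x - \<epsilon> * y))"
    and "B * ((x - z) * (z - y)) = h * ((x - \<sigma> * y) * (z - \<epsilon> * y))"
    and "q * (y - \<epsilon> * x) = p * (x - \<epsilon> * y)" and "r * (z - \<epsilon> * y) = q * (y - \<epsilon> * z)"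
    and "x \<noteq> z" "y - \<epsilon> * x \<noteq> 0" "z - \<epsilon> * y \<noteq> 0"
  shows "C * (x * p - y * q) + B * (z * r - y * q) = - h * \<epsilon> * (1 + \<sigma>) * (y * q)"
proof -
  have "((z - x) * (y - \<epsilon> * x) * (z - \<epsilon> * y)) *
      (C * (x * p - y * q) + B * (z * r - y * q) + h * \<epsilon> * (1 + \<sigma>) * (y * q)) = 0"
    using assms(1-4) by algebra
  then show ?thesis using assms(5-7) by simp
qed

lemma (in intersection_array) tight_pair_triangle_free:
  assumes "1 < D" "a 1 = 0" "f 0 = 1" "g 0 = 1"
    and "cosine_recurrence D b c f" "cosine_recurrence D b c g"
    and "cosine_recurrence D b c (\<lambda>i. f i * g i)"
  shows "f 1 ^ 2 = 1 \<or> g 1 ^ 2 = 1"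
proof -
  have k: "real (b 0) = 1 + real (b 1)" using a_eq[of 1] assms(1,2) c_1 by simp
  have "real (b 1) * f 2 = real (b 0) * f 1 ^ 2 - 1"
    and "real (b 1) * g 2 = real (b 0) * g 1 ^ 2 - 1"
    and "real (b 1) * (f 2 * g 2) = real (b 0) * (f 1 * g 1) ^ 2 - 1"
    using cosine_recurrence_1[OF assms(5)] cosine_recurrence_1[OF assms(6)]
      cosine_recurrence_1[OF assms(7)] assms(1,3,4) k by (simp_all, algebra+)
  then have "real (b 0) * ((f 1 ^ 2 - 1) * (g 1 ^ 2 - 1)) = 0" using k by algebra
  then show ?thesis using b_pos[of 0] assms(1) by simp
qed

text \<open>The auxiliary relation of a tight pair, solved for the second sequence.\<close>

primrec partner_seq :: "(nat \<Rightarrow> real) \<Rightarrow> real \<Rightarrow> nat \<Rightarrow> real" where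
  "partner_seq s e 0 = 1"
| "partner_seq s e (Suc j) = partner_seq s e j * (s j - e * s (Suc j)) / (s (Suc j) - e * s j)"

locale parametrized_array = intersection_array +
  fixes s :: "nat \<Rightarrow> real" and e h :: real
  assumes one_less_D: "1 < D"
    and param: "intersection_numbers_param D b c s e h"
begin

lemma s_0: "s 0 = 1" and e_neq_1: "e \<noteq> 1" and e_neq_minus_1: "e \<noteq> -1"
  and s_1_neq_1: "s 1 \<noteq> 1"
  using param by (simp_all add: intersection_numbers_param_def)

lemma s_distinct:
  assumes "1 \<le> i" "i < D"
  shows "s (i - 1) \<noteq> s (i + 1)" "s (i + 1) \<noteq> s i" "s (i - 1) \<noteq> s i"
  using param assms by (auto simp: intersection_numbers_param_def)

lemma b_mult:
  assumes "1 \<le> i" "i < D"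
  shows "real (b i) * ((s (i - 1) - s (i + 1)) * (s (i + 1) - s i))
    = h * ((s (i - 1) - s 1 * s i) * (s (i + 1) - e * s i))"
  using param assms s_distinct[OF assms] by (auto simp: intersection_numbers_param_def eq_divide_eq)

lemma c_mult:
  assumes "1 \<le> i" "i < D"
  shows "real (c i) * ((s (i + 1) - s (i - 1)) * (s (i - 1) - s i))
    = h * ((s (i + 1) - s 1 * s i) * (s (i - 1) - e * s i))"
  using param assms s_distinct[OF assms] by (auto simp: intersection_numbers_param_def eq_divide_eq)

lemma h_valency: "h * (s 1 - e) = real (b 0) * (s 1 - 1)"
  using param s_1_neq_1 by (simp add: intersection_numbers_param_def field_simps)

lemma s_1_neq_e: "s 1 \<noteq> e"
  using h_valency b_pos[of 0] D_pos s_1_neq_1 by auto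

lemma rec_s: "cosine_recurrence D b c s"
  unfolding cosine_recurrence_def
  using param_recurrence_cosine[OF c_mult b_mult] s_distinct h_valency by auto

lemma shift_nonzero:
  assumes "j < D"
  shows "s (Suc j) - e * s j \<noteq> 0"
proof (cases "j = 0")
  case True
  then show ?thesis using s_1_neq_e s_0 by simp
next
  case False
  then have j: "1 \<le> j" "j < D" using assms by auto
  have "real (b j) * ((s (j - 1) - s (j + 1)) * (s (j + 1) - s j)) \<noteq> 0"
    using b_pos[OF j(2)] s_distinct[OF j] by simp
  then show ?thesis using b_mult[OF j] by auto
qed

abbreviation \<rho> :: "nat \<Rightarrow> real" where "\<rho> \<equiv> partner_seq s e"

lemma partner_step:
  assumes "1 \<le> i" "i \<le> D"
  shows "\<rho> i * (s i - e * s (i - 1)) = \<rho> (i - 1) * (s (i - 1) - e * s i)"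
proof -
  obtain j where j: "i = Suc j" "j < D" using assms by (cases i) auto
  show ?thesis using shift_nonzero[OF j(2)] unfolding j(1) by simp
qed

lemma partner_1: "\<rho> 1 * (s 1 - e) = 1 - e * s 1"
  using partner_step[of 1] D_pos s_0 by simp

lemma partner_coefficient: "real (b 0) * (\<rho> 1 - 1) = - h * (1 + e)"
proof -
  have "(s 1 - e) * (real (b 0) * (\<rho> 1 - 1) + h * (1 + e)) = 0"
    using partner_1 h_valency by algebra
  then show ?thesis using s_1_neq_e by simp
qed

lemma product_coefficient: "real (b 0) * (s 1 * \<rho> 1 - 1) = - h * e * (1 + s 1)"
proof -
  have "(s 1 - e) * (real (b 0) * (s 1 * \<rho> 1 - 1) + h * e * (1 + s 1)) = 0"
    using partner_1 h_valency by algebra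
  then show ?thesis using s_1_neq_e by simp
qed

lemma rec_partner: "cosine_recurrence D b c \<rho>"
  and rec_product: "cosine_recurrence D b c (\<lambda>i. s i * \<rho> i)"
proof -
  have "real (c i) * (\<rho> (i - 1) - \<rho> i) + real (b i) * (\<rho> (i + 1) - \<rho> i) = - h * (1 + e) * \<rho> i"
    and "real (c i) * (s (i - 1) * \<rho> (i - 1) - s i * \<rho> i)
        + real (b i) * (s (i + 1) * \<rho> (i + 1) - s i * \<rho> i) = - h * e * (1 + s 1) * (s i * \<rho> i)"
    if i: "1 \<le> i" "i < D" for i
  proof -
    note steps = partner_step[of i] partner_step[of "i + 1"]
    have nz: "s i - e * s (i - 1) \<noteq> 0" "s (i + 1) - e * s i \<noteq> 0"
      using shift_nonzero[of "i - 1"] shift_nonzero[of i] i by simp_all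
    show "real (c i) * (\<rho> (i - 1) - \<rho> i) + real (b i) * (\<rho> (i + 1) - \<rho> i) = - h * (1 + e) * \<rho> i"
      by (rule param_recurrence_partner[OF c_mult[OF i] b_mult[OF i]])
        (use steps nz s_distinct[OF i] i in auto)
    show "real (c i) * (s (i - 1) * \<rho> (i - 1) - s i * \<rho> i)
        + real (b i) * (s (i + 1) * \<rho> (i + 1) - s i * \<rho> i) = - h * e * (1 + s 1) * (s i * \<rho> i)"
      by (rule param_recurrence_product[OF c_mult[OF i] b_mult[OF i]])
        (use steps nz s_distinct[OF i] i in auto)
  qed
  then show "cosine_recurrence D b c \<rho>" "cosine_recurrence D b c (\<lambda>i. s i * \<rho> i)"
    unfolding cosine_recurrence_def using partner_coefficient product_coefficient s_0 by auto
qed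

lemma aux_partner: "aux_param_pair D s \<rho> e"
  unfolding aux_param_pair_def using partner_step by (auto simp: algebra_simps)

lemma partner_1_eq_minus_1:
  assumes "\<rho> 1 = -1"
  shows "s 1 = -1"
proof -
  have "(e - 1) * (s 1 + 1) = 0" using partner_1 unfolding assms by algebra
  then show ?thesis using e_neq_1 by simp
qed

lemma partner_1_neq_1: "\<rho> 1 \<noteq> 1"
proof
  assume "\<rho> 1 = 1"
  then have "(s 1 - 1) * (1 + e) = 0" using partner_1 by algebra
  then show False using s_1_neq_1 e_neq_minus_1 by (simp add: add_eq_0_iff)
qed

lemma a_1_neq_0: "a 1 \<noteq> 0"
proof
  assume a_1: "a 1 = 0"
  have "s 1 ^ 2 = 1 \<or> \<rho> 1 ^ 2 = 1"
    by (rule tight_pair_triangle_free[OF one_less_D a_1 s_0 _ rec_s rec_partner rec_product]) simp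
  then have s_1: "s 1 = -1"
    using s_1_neq_1 partner_1_neq_1 partner_1_eq_minus_1 unfolding power2_eq_1_iff by blast
  have "(1 - s 1) + real (b 1) * (s 2 - s 1) = real (b 0) * (s 1 - 1) * s 1"
    by (rule cosine_recurrence_1[OF rec_s one_less_D s_0])
  moreover have "real (b 0) = 1 + real (b 1)" using a_eq[of 1] a_1 c_1 one_less_D by simp
  ultimately have "real (b 1) * (s 2 - 1) = 0" unfolding s_1 by algebra
  then show False using b_pos[of 1] one_less_D s_distinct(1)[of 1] s_0 by (simp add: numeral_2_eq_2)
qed

lemma h_eq: "h = (1 - s 1) * (1 - s 2) / ((s 1 ^ 2 - s 2) * (1 - e * s 1))"
proof -
  have "(s 2 - 1) * (1 - s 1) = h * ((s 2 - s 1 * s 1) * (1 - e * s 1))"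
    using c_mult[of 1] one_less_D s_0 c_1 by (simp add: numeral_2_eq_2)
  then have "(1 - s 1) * (1 - s 2) = h * ((s 1 ^ 2 - s 2) * (1 - e * s 1))"
    by algebra
  moreover have "(1 - s 1) * (1 - s 2) \<noteq> 0"
    using s_1_neq_1 s_distinct(1)[of 1] one_less_D s_0 by (simp add: numeral_2_eq_2)
  ultimately show ?thesis by (auto simp: eq_divide_eq)
qed

lemma tight_feasible:
  "a 1 \<noteq> 0 \<and> feasible_pcs D a b c s \<and> aux_param D a b c s e \<and>
    h = (1 - s 1) * (1 - s 2) / ((s 1 ^ 2 - s 2) * (1 - e * s 1))"
proof -
  have "\<forall>i\<in>{1..D-1}. s (i - 1) \<noteq> s (i + 1)" using s_distinct(1) D_pos by auto
  moreover have "\<rho> 0 = 1" by simp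
  ultimately have "feasible_pcs D a b c s \<and> aux_param D a b c s e"
    unfolding feasible_aux_param_iff
    using s_0 s_1_neq_1 rec_s partner_1_neq_1 rec_partner rec_product aux_partner by blast
  then show ?thesis using a_1_neq_0 h_eq by blast
qed

end

lemma (in intersection_array) tight_feasible_iff_param:
  assumes "3 \<le> D"
  shows "(a 1 \<noteq> 0 \<and> feasible_pcs D a b c s \<and> aux_param D a b c s e \<and>
          h = (1 - s 1) * (1 - s 2) / ((s 1 ^ 2 - s 2) * (1 - e * s 1)))
    \<longleftrightarrow> intersection_numbers_param D b c s e h"
proof
  assume lhs: "a 1 \<noteq> 0 \<and> feasible_pcs D a b c s \<and> aux_param D a b c s e \<and>
    h = (1 - s 1) * (1 - s 2) / ((s 1 ^ 2 - s 2) * (1 - e * s 1))"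
  then have "feasible_pcs D a b c s \<and> aux_param D a b c s e" by blast
  then obtain r where "s 0 = 1" "s 1 \<noteq> 1" "cosine_recurrence D b c s"
    "\<forall>i\<in>{1..D-1}. s (i - 1) \<noteq> s (i + 1)"
    "r 0 = 1" "r 1 \<noteq> 1" "cosine_recurrence D b c r" "aux_param_pair D s r e"
    unfolding feasible_aux_param_iff by blast
  then interpret feasible_pair D a b c s r e
    using assms lhs by unfold_locales auto
  show "intersection_numbers_param D b c s e h"
    using parametrization lhs by simp
next
  assume "intersection_numbers_param D b c s e h"
  then interpret parametrized_array D a b c s e h
    using assms by unfold_locales auto
  show "a 1 \<noteq> 0 \<and> feasible_pcs D a b c s \<and> aux_param D a b c s e \<and>
    h = (1 - s 1) * (1 - s 2) / ((s 1 ^ 2 - s 2) * (1 - e * s 1))"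
    by (rule tight_feasible)
qed

theorem theorem15p2:
  fixes V :: "'a set" and E :: "'a \<Rightarrow> 'a \<Rightarrow> bool" and D :: nat
    and a b c :: "nat \<Rightarrow> nat" and s :: "nat \<Rightarrow> real" and e h :: real
  assumes "distance_regular V E D a b c" and "D \<ge> 3"
  shows "(a 1 \<noteq> 0 \<and> feasible_pcs D a b c s \<and> aux_param D a b c s e \<and>
          h = (1 - s 1) * (1 - s 2) / ((s 1 ^ 2 - s 2) * (1 - e * s 1)))
     \<longleftrightarrow>
         (s 0 = 1 \<and> e \<noteq> 1 \<and> e \<noteq> -1 \<and>
          real (b 0) = h * (s 1 - e) / (s 1 - 1) \<and>
          (\<forall>i\<in>{1..D-1}.
             real (b i) = h * ((s (i - 1) - s 1 * s i) * (s (i + 1) - e * s i))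
                            / ((s (i - 1) - s (i + 1)) * (s (i + 1) - s i)) \<and>
             real (c i) = h * ((s (i + 1) - s 1 * s i) * (s (i - 1) - e * s i))
                            / ((s (i + 1) - s (i - 1)) * (s (i - 1) - s i))) \<and>
          s 1 - 1 \<noteq> 0 \<and>
          (\<forall>i\<in>{1..D-1}. s (i - 1) - s (i + 1) \<noteq> 0 \<and> s (i + 1) - s i \<noteq> 0 \<and>
                          s (i + 1) - s (i - 1) \<noteq> 0 \<and> s (i - 1) - s i \<noteq> 0))"
proof -
  interpret intersection_array D a b c
    using distance_regular_intersection_array[OF assms(1)] assms(2) by simp
  show ?thesis
    using tight_feasible_iff_param[OF assms(2)] unfolding intersection_numbers_param_def .
qed

end
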